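(* Let $S_1$ and $S_2$ be two XML Schemas, let $u\ge 0$ be the severity level, let $m$ be the maximum of the numbers of complex elements of $S_1$ and of $S_2$, and let $q$ be the maximum cardinality of a neighborhood $neighborhood(x,v)$, $0\le v\le u$, of an x-component $x$ of $S_1$ or $S_2$. Assuming the neighborhoods are available and each thesaurus lookup takes constant time, the values $synonymous(E_1,E_2,u)$ for all pairs of complex elements $E_1$ of $S_1$ and $E_2$ of $S_2$ (i.e. all synonymies at severity level $u$ between $S_1$ and $S_2$) can be computed in worst-case time $O((u+1)\, q^3\, m^2)$.
   Context: An x-component of an XML Schema $S$ is an element or an attribute declared in $S$; $XCompSet(S)$ is the set of x-components. A complex element is an element declared with a complex type; a simple element is one of simple type. For x-components $x_S,x_T$ of the same schema: $veryclose(x_S,x_T)$ iff $x_T=x_S$, or $x_T$ is an attribute of $x_S$, or $x_T$ is a simple sub-element of $x_S$; $close(x_S,x_T)$ iff $x_T$ is a complex sub-element of $x_S$, or $x_T$ is an element and $x_S$ has an IDREF/IDREFS attribute referring to $x_T$; $near$ is the disjunction of the two. The connection cost $CC(x_S,x_T)$ is $0$ if veryclose, $1$ if close and not veryclose, otherwise the minimum over directed paths of distinct x-components joined by $near$ pairs of the sum of pair costs ($0$ for veryclose pairs, $1$ for close pairs), and $\infty$ if no path exists. $neighborhood(x_S,j)=\{x_T\in XCompSet(S): CC(x_S,x_T)\le j\}$. Fix a thesaurus (a symmetric synonymy relation on names). For x-components $x_1$ of $S_1$, $x_2$ of $S_2$ and level $v$, $BG(v)$ is the bipartite graph with node sets $P(v)$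 (the x-components of $neighborhood(x_1,v)$) and $Q(v)$ (those of $neighborhood(x_2,v)$), with an edge between $p$ and $q$ iff their names are synonymous in the thesaurus; $A'(v)$ is a maximum matching and $\phi_{BG}(v)=\frac{2|A'(v)|}{|P(v)|+|Q(v)|}$. The neighborhoods at level $v$ are similar iff $\phi_{BG}(v)>1/2$, and $synonymous(x_1,x_2,u)$ is true iff they are similar at every level $v=0,\dots,u$. *)

theory Defs
  imports Main "HOL-Library.Extended_Nat"
begin

section \<open>XML Schemas, x-components, connection cost, neighborhoods\<close>

text \<open>An XML Schema is modelled by its finite set of x-components (type 'x), together with:
  which x-components are elements (the others are attributes), which elements are complex
  (declared with a complex type; the remaining elements are simple), the attribute relation,
  the sub-element relation, the IDREF/IDREFS reference relation, and the name of each
  x-component (names of type 'n).\<close>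

record ('x, 'n) schema =
  xcomps     :: "'x set"
  is_elem    :: "'x \<Rightarrow> bool"
  is_complex :: "'x \<Rightarrow> bool"
  attr_of    :: "'x \<Rightarrow> 'x \<Rightarrow> bool"       \<comment> \<open>attr_of S a b: b is an attribute of a\<close>
  subelem    :: "'x \<Rightarrow> 'x \<Rightarrow> bool"       \<comment> \<open>subelem S a b: b is a sub-element of a\<close>
  idref_to   :: "'x \<Rightarrow> 'x \<Rightarrow> bool"       \<comment> \<open>a has an IDREF/IDREFS attribute referring to b\<close>
  xname      :: "'x \<Rightarrow> 'n"

definition wf_schema :: "('x, 'n) schema \<Rightarrow> bool" where
  "wf_schema S \<longleftrightarrow> finite (xcomps S)
     \<and> (\<forall>a b. attr_of S a b \<longrightarrow> a \<in> xcomps S \<and> b \<in> xcomps S \<and> is_elem S a \<and> \<not> is_elem S b)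
     \<and> (\<forall>a b. subelem S a b \<longrightarrow> a \<in> xcomps S \<and> b \<in> xcomps S \<and> is_elem S a \<and> is_elem S b)
     \<and> (\<forall>a b. idref_to S a b \<longrightarrow> a \<in> xcomps S \<and> b \<in> xcomps S)"

definition complex_elems :: "('x, 'n) schema \<Rightarrow> 'x set" where
  "complex_elems S = {x \<in> xcomps S. is_elem S x \<and> is_complex S x}"

definition veryclose :: "('x, 'n) schema \<Rightarrow> 'x \<Rightarrow> 'x \<Rightarrow> bool" where
  "veryclose S a b \<longleftrightarrow> b = a \<or> attr_of S a b
      \<or> (subelem S a b \<and> is_elem S b \<and> \<not> is_complex S b)"

definition close :: "('x, 'n) schema \<Rightarrow> 'x \<Rightarrow> 'x \<Rightarrow> bool" where
  "close S a b \<longleftrightarrow> (subelem S a b \<and> is_elem S b \<and> is_complex S b)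
      \<or> (is_elem S b \<and> idref_to S a b)"

definition near :: "('x, 'n) schema \<Rightarrow> 'x \<Rightarrow> 'x \<Rightarrow> bool" where
  "near S a b \<longleftrightarrow> veryclose S a b \<or> close S a b"

definition pair_cost :: "('x, 'n) schema \<Rightarrow> 'x \<Rightarrow> 'x \<Rightarrow> nat" where
  "pair_cost S a b = (if veryclose S a b then 0 else 1)"

fun path_cost :: "('x, 'n) schema \<Rightarrow> 'x list \<Rightarrow> nat" where
  "path_cost S (a # b # rest) = pair_cost S a b + path_cost S (b # rest)"
| "path_cost S _ = 0"

definition is_path :: "('x, 'n) schema \<Rightarrow> 'x \<Rightarrow> 'x \<Rightarrow> 'x list \<Rightarrow> bool" where
  "is_path S a b xs \<longleftrightarrow> xs \<noteq> [] \<and> hd xs = a \<and> last xs = b \<and> distinct xs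
      \<and> set xs \<subseteq> xcomps S \<and> (\<forall>i. Suc i < length xs \<longrightarrow> near S (xs ! i) (xs ! Suc i))"

text \<open>Connection cost (Inf of the empty set of enat is \<infinity>).\<close>
definition CC :: "('x, 'n) schema \<Rightarrow> 'x \<Rightarrow> 'x \<Rightarrow> enat" where
  "CC S a b = (if veryclose S a b then 0
               else if close S a b then 1
               else Inf {enat (path_cost S xs) | xs. is_path S a b xs})"

definition neighborhood :: "('x, 'n) schema \<Rightarrow> 'x \<Rightarrow> nat \<Rightarrow> 'x set" where
  "neighborhood S x j = {y \<in> xcomps S. CC S x y \<le> enat j}"

section \<open>Bipartite graphs of neighborhoods, maximum matchings, synonymy\<close>

definition is_matching ::
  "('n \<Rightarrow> 'n \<Rightarrow> bool) \<Rightarrow> ('x, 'n) schema \<Rightarrow> ('y, 'n) schema \<Rightarrow> 'x set \<Rightarrow> 'y set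
     \<Rightarrow> ('x \<times> 'y) set \<Rightarrow> bool" where
  "is_matching th S1 S2 P Q M \<longleftrightarrow> M \<subseteq> P \<times> Q
     \<and> (\<forall>(p, q) \<in> M. th (xname S1 p) (xname S2 q))
     \<and> (\<forall>(p, q) \<in> M. \<forall>(p', q') \<in> M. (p = p' \<longleftrightarrow> q = q'))"

definition max_matching_size ::
  "('n \<Rightarrow> 'n \<Rightarrow> bool) \<Rightarrow> ('x, 'n) schema \<Rightarrow> ('y, 'n) schema \<Rightarrow> 'x set \<Rightarrow> 'y set \<Rightarrow> nat" where
  "max_matching_size th S1 S2 P Q = Max {card M | M. is_matching th S1 S2 P Q M}"

definition phi_BG ::
  "('n \<Rightarrow> 'n \<Rightarrow> bool) \<Rightarrow> ('x, 'n) schema \<Rightarrow> ('y, 'n) schema \<Rightarrow> 'x \<Rightarrow> 'y \<Rightarrow> nat \<Rightarrow> real" where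
  "phi_BG th S1 S2 x1 x2 v =
     (let P = neighborhood S1 x1 v; Q = neighborhood S2 x2 v
      in 2 * real (max_matching_size th S1 S2 P Q) / (real (card P) + real (card Q)))"

definition similar_at ::
  "('n \<Rightarrow> 'n \<Rightarrow> bool) \<Rightarrow> ('x, 'n) schema \<Rightarrow> ('y, 'n) schema \<Rightarrow> 'x \<Rightarrow> 'y \<Rightarrow> nat \<Rightarrow> bool" where
  "similar_at th S1 S2 x1 x2 v \<longleftrightarrow> phi_BG th S1 S2 x1 x2 v > 1 / 2"

definition synonymous ::
  "('n \<Rightarrow> 'n \<Rightarrow> bool) \<Rightarrow> ('x, 'n) schema \<Rightarrow> ('y, 'n) schema \<Rightarrow> 'x \<Rightarrow> 'y \<Rightarrow> nat \<Rightarrow> bool" where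
  "synonymous th S1 S2 x1 x2 u \<longleftrightarrow> (\<forall>v \<le> u. similar_at th S1 S2 x1 x2 v)"

section \<open>The algorithm and its cost model\<close>

text \<open>Cost model (RAM model, Functional-Data-Structures style): every function call counts one
  step, every thesaurus lookup counts one step, the precomputed neighborhoods (given as lists
  nb1 x v, nb2 x v) are accessed in one step, and the arrays indexed by x-components used by the
  algorithm (adjacency lists, mate array, visited array; modelled as HOL functions) are read and
  updated in one step; initialising / resetting such an array for the |Q| right nodes costs |Q|.
  Each function f below is paired with a hand-written step-counting function T_f mirroring it.\<close>

text \<open>Adjacency lists of the bipartite graph: for p, the nodes q of Q with synonymous names.
  Building them for all p in P costs |P| (|Q| + 2) + 1 steps (|Q| thesaurus lookups per p).\<close>
definition adj_of :: "('n \<Rightarrow> 'n \<Rightarrow> bool) \<Rightarrow> ('x \<Rightarrow> 'n) \<Rightarrow> ('y \<Rightarrow> 'n) \<Rightarrow> 'y list \<Rightarrow> 'x \<Rightarrow> 'y list" where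
  "adj_of th n1 n2 Q p = filter (\<lambda>q. th (n1 p) (n2 q)) Q"

fun T_build_adj :: "'x list \<Rightarrow> 'y list \<Rightarrow> nat" where
  "T_build_adj [] Q = 1"
| "T_build_adj (p # ps) Q = length Q + 2 + T_build_adj ps Q"

text \<open>Kuhn's augmenting-path search from the left node p, scanning the candidate list qs;
  mt is the mate array of the right nodes, vs the visited array; the first argument is fuel.\<close>
fun aug :: "nat \<Rightarrow> ('x \<Rightarrow> 'y list) \<Rightarrow> ('y \<Rightarrow> 'x option) \<Rightarrow> ('y \<Rightarrow> bool) \<Rightarrow> 'x \<Rightarrow> 'y list
              \<Rightarrow> bool \<times> ('y \<Rightarrow> 'x option) \<times> ('y \<Rightarrow> bool)" where
  "aug 0 adj mt vs p qs = (False, mt, vs)"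
| "aug (Suc n) adj mt vs p [] = (False, mt, vs)"
| "aug (Suc n) adj mt vs p (q # qs) =
     (if vs q then aug (Suc n) adj mt vs p qs
      else (case mt q of
              None \<Rightarrow> (True, mt(q := Some p), vs(q := True))
            | Some p' \<Rightarrow>
                (case aug n adj mt (vs(q := True)) p' (adj p') of
                   (True, mt', vs') \<Rightarrow> (True, mt'(q := Some p), vs')
                 | (False, mt', vs') \<Rightarrow> aug (Suc n) adj mt' vs' p qs)))"

fun T_aug :: "nat \<Rightarrow> ('x \<Rightarrow> 'y list) \<Rightarrow> ('y \<Rightarrow> 'x option) \<Rightarrow> ('y \<Rightarrow> bool) \<Rightarrow> 'x \<Rightarrow> 'y list \<Rightarrow> nat" where
  "T_aug 0 adj mt vs p qs = 1"
| "T_aug (Suc n) adj mt vs p [] = 1"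
| "T_aug (Suc n) adj mt vs p (q # qs) =
     1 + (if vs q then T_aug (Suc n) adj mt vs p qs
          else (case mt q of
                  None \<Rightarrow> 1
                | Some p' \<Rightarrow>
                    T_aug n adj mt (vs(q := True)) p' (adj p') +
                    (case aug n adj mt (vs(q := True)) p' (adj p') of
                       (True, mt', vs') \<Rightarrow> 1
                     | (False, mt', vs') \<Rightarrow> T_aug (Suc n) adj mt' vs' p qs)))"

text \<open>One phase per left node; the visited array is reset (cost |Q|) at each phase.\<close>
fun kuhn :: "('x \<Rightarrow> 'y list) \<Rightarrow> 'y list \<Rightarrow> ('y \<Rightarrow> 'x option) \<Rightarrow> 'x list \<Rightarrow> ('y \<Rightarrow> 'x option)" where
  "kuhn adj Q mt [] = mt"
| "kuhn adj Q mt (p # ps) =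
     kuhn adj Q (fst (snd (aug (Suc (length Q)) adj mt (\<lambda>_. False) p (adj p)))) ps"

fun T_kuhn :: "('x \<Rightarrow> 'y list) \<Rightarrow> 'y list \<Rightarrow> ('y \<Rightarrow> 'x option) \<Rightarrow> 'x list \<Rightarrow> nat" where
  "T_kuhn adj Q mt [] = 1"
| "T_kuhn adj Q mt (p # ps) =
     1 + length Q + T_aug (Suc (length Q)) adj mt (\<lambda>_. False) p (adj p)
       + T_kuhn adj Q (fst (snd (aug (Suc (length Q)) adj mt (\<lambda>_. False) p (adj p)))) ps"

definition matching_size_alg ::
  "('n \<Rightarrow> 'n \<Rightarrow> bool) \<Rightarrow> ('x \<Rightarrow> 'n) \<Rightarrow> ('y \<Rightarrow> 'n) \<Rightarrow> 'x list \<Rightarrow> 'y list \<Rightarrow> nat" where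
  "matching_size_alg th n1 n2 P Q =
     (let adj = adj_of th n1 n2 Q;
          mt = kuhn adj Q (\<lambda>_. None) P
      in length (filter (\<lambda>q. mt q \<noteq> None) Q))"

definition T_matching_size_alg ::
  "('n \<Rightarrow> 'n \<Rightarrow> bool) \<Rightarrow> ('x \<Rightarrow> 'n) \<Rightarrow> ('y \<Rightarrow> 'n) \<Rightarrow> 'x list \<Rightarrow> 'y list \<Rightarrow> nat" where
  "T_matching_size_alg th n1 n2 P Q =
     (let adj = adj_of th n1 n2 Q
      in 1 + T_build_adj P Q + (length Q + 1) + T_kuhn adj Q (\<lambda>_. None) P + (length Q + 1))"

text \<open>Similarity test at one level: 2|A'|/(|P|+|Q|) > 1/2, i.e. 4|A'| > |P| + |Q|.\<close>
definition similar_alg ::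
  "('n \<Rightarrow> 'n \<Rightarrow> bool) \<Rightarrow> ('x \<Rightarrow> 'n) \<Rightarrow> ('y \<Rightarrow> 'n) \<Rightarrow> 'x list \<Rightarrow> 'y list \<Rightarrow> bool" where
  "similar_alg th n1 n2 P Q \<longleftrightarrow> length P + length Q < 4 * matching_size_alg th n1 n2 P Q"

definition T_similar_alg ::
  "('n \<Rightarrow> 'n \<Rightarrow> bool) \<Rightarrow> ('x \<Rightarrow> 'n) \<Rightarrow> ('y \<Rightarrow> 'n) \<Rightarrow> 'x list \<Rightarrow> 'y list \<Rightarrow> nat" where
  "T_similar_alg th n1 n2 P Q = 3 + length P + length Q + T_matching_size_alg th n1 n2 P Q"

fun syn_upto_alg ::
  "('n \<Rightarrow> 'n \<Rightarrow> bool) \<Rightarrow> ('x \<Rightarrow> 'n) \<Rightarrow> ('y \<Rightarrow> 'n) \<Rightarrow> ('x \<Rightarrow> nat \<Rightarrow> 'x list) \<Rightarrow> ('y \<Rightarrow> nat \<Rightarrow> 'y list)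
     \<Rightarrow> 'x \<Rightarrow> 'y \<Rightarrow> nat \<Rightarrow> bool" where
  "syn_upto_alg th n1 n2 nb1 nb2 e1 e2 0 = similar_alg th n1 n2 (nb1 e1 0) (nb2 e2 0)"
| "syn_upto_alg th n1 n2 nb1 nb2 e1 e2 (Suc v) =
     (syn_upto_alg th n1 n2 nb1 nb2 e1 e2 v \<and> similar_alg th n1 n2 (nb1 e1 (Suc v)) (nb2 e2 (Suc v)))"

fun T_syn_upto_alg ::
  "('n \<Rightarrow> 'n \<Rightarrow> bool) \<Rightarrow> ('x \<Rightarrow> 'n) \<Rightarrow> ('y \<Rightarrow> 'n) \<Rightarrow> ('x \<Rightarrow> nat \<Rightarrow> 'x list) \<Rightarrow> ('y \<Rightarrow> nat \<Rightarrow> 'y list)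
     \<Rightarrow> 'x \<Rightarrow> 'y \<Rightarrow> nat \<Rightarrow> nat" where
  "T_syn_upto_alg th n1 n2 nb1 nb2 e1 e2 0 = 3 + T_similar_alg th n1 n2 (nb1 e1 0) (nb2 e2 0)"
| "T_syn_upto_alg th n1 n2 nb1 nb2 e1 e2 (Suc v) =
     3 + T_syn_upto_alg th n1 n2 nb1 nb2 e1 e2 v
       + T_similar_alg th n1 n2 (nb1 e1 (Suc v)) (nb2 e2 (Suc v))"

fun syn_row_alg ::
  "('n \<Rightarrow> 'n \<Rightarrow> bool) \<Rightarrow> ('x \<Rightarrow> 'n) \<Rightarrow> ('y \<Rightarrow> 'n) \<Rightarrow> ('x \<Rightarrow> nat \<Rightarrow> 'x list) \<Rightarrow> ('y \<Rightarrow> nat \<Rightarrow> 'y list)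
     \<Rightarrow> nat \<Rightarrow> 'x \<Rightarrow> 'y list \<Rightarrow> (('x \<times> 'y) \<times> bool) list" where
  "syn_row_alg th n1 n2 nb1 nb2 u e1 [] = []"
| "syn_row_alg th n1 n2 nb1 nb2 u e1 (e2 # es) =
     ((e1, e2), syn_upto_alg th n1 n2 nb1 nb2 e1 e2 u) # syn_row_alg th n1 n2 nb1 nb2 u e1 es"

fun T_syn_row_alg ::
  "('n \<Rightarrow> 'n \<Rightarrow> bool) \<Rightarrow> ('x \<Rightarrow> 'n) \<Rightarrow> ('y \<Rightarrow> 'n) \<Rightarrow> ('x \<Rightarrow> nat \<Rightarrow> 'x list) \<Rightarrow> ('y \<Rightarrow> nat \<Rightarrow> 'y list)
     \<Rightarrow> nat \<Rightarrow> 'x \<Rightarrow> 'y list \<Rightarrow> nat" where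
  "T_syn_row_alg th n1 n2 nb1 nb2 u e1 [] = 1"
| "T_syn_row_alg th n1 n2 nb1 nb2 u e1 (e2 # es) =
     1 + T_syn_upto_alg th n1 n2 nb1 nb2 e1 e2 u + T_syn_row_alg th n1 n2 nb1 nb2 u e1 es"

fun all_syn_alg ::
  "('n \<Rightarrow> 'n \<Rightarrow> bool) \<Rightarrow> ('x \<Rightarrow> 'n) \<Rightarrow> ('y \<Rightarrow> 'n) \<Rightarrow> ('x \<Rightarrow> nat \<Rightarrow> 'x list) \<Rightarrow> ('y \<Rightarrow> nat \<Rightarrow> 'y list)
     \<Rightarrow> nat \<Rightarrow> 'x list \<Rightarrow> 'y list \<Rightarrow> (('x \<times> 'y) \<times> bool) list" where
  "all_syn_alg th n1 n2 nb1 nb2 u [] cs2 = []"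
| "all_syn_alg th n1 n2 nb1 nb2 u (e1 # es) cs2 =
     syn_row_alg th n1 n2 nb1 nb2 u e1 cs2 @ all_syn_alg th n1 n2 nb1 nb2 u es cs2"

text \<open>Appending a row of length |cs2| costs |cs2| + 1.\<close>
fun T_all_syn_alg ::
  "('n \<Rightarrow> 'n \<Rightarrow> bool) \<Rightarrow> ('x \<Rightarrow> 'n) \<Rightarrow> ('y \<Rightarrow> 'n) \<Rightarrow> ('x \<Rightarrow> nat \<Rightarrow> 'x list) \<Rightarrow> ('y \<Rightarrow> nat \<Rightarrow> 'y list)
     \<Rightarrow> nat \<Rightarrow> 'x list \<Rightarrow> 'y list \<Rightarrow> nat" where
  "T_all_syn_alg th n1 n2 nb1 nb2 u [] cs2 = 1"
| "T_all_syn_alg th n1 n2 nb1 nb2 u (e1 # es) cs2 =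
     1 + T_syn_row_alg th n1 n2 nb1 nb2 u e1 cs2 + (length cs2 + 1)
       + T_all_syn_alg th n1 n2 nb1 nb2 u es cs2"

definition max_complex :: "('x, 'n) schema \<Rightarrow> ('y, 'n) schema \<Rightarrow> nat" where
  "max_complex S1 S2 = max (card (complex_elems S1)) (card (complex_elems S2))"

definition max_nbhd :: "('x, 'n) schema \<Rightarrow> ('y, 'n) schema \<Rightarrow> nat \<Rightarrow> nat" where
  "max_nbhd S1 S2 u = Max (insert 0
      ({card (neighborhood S1 x v) | x v. x \<in> xcomps S1 \<and> v \<le> u}
     \<union> {card (neighborhood S2 y v) | y v. y \<in> xcomps S2 \<and> v \<le> u}))"

end

theory Submission
  imports Defs
begin

text \<open>
  First, Kuhn's augmenting-path algorithm (functions aug and kuhn) computes the size of a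
  maximum bipartite matching.  We keep the invariant that the mate array is a matching of the
  left nodes processed so far whose size equals the maximum matching size of those nodes.  When
  a new left node p is processed, either the search finds an augmenting path and the size grows
  by one (which is optimal, since adding one node raises the maximum by at most one), or the
  search fails; then the visited right nodes form a Hungarian tree, and an exchange argument
  turns every matching of the enlarged node set into an equally large matching of the old one.

  Second, the similarity test 4|A'| > |P| + |Q| is equivalent to phi_BG > 1/2, so the algorithm
  decides synonymy at every level.  Third, an amortised bound (each right node is visited at most
  once per phase) gives O(q^2) steps per phase, hence O(q^3) per level, O((u+1) q^3) per pair of
  complex elements and O((u+1) q^3 m^2) overall.
\<close>

section \<open>Matchings of a bipartite relation\<close>

definition bip_matching :: "('x \<Rightarrow> 'y \<Rightarrow> bool) \<Rightarrow> 'x set \<Rightarrow> 'y set \<Rightarrow> ('x \<times> 'y) set \<Rightarrow> bool" where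
  "bip_matching E A B M \<longleftrightarrow> M \<subseteq> A \<times> B \<and> (\<forall>(p, q) \<in> M. E p q)
     \<and> (\<forall>(p, q) \<in> M. \<forall>(p', q') \<in> M. (p = p' \<longleftrightarrow> q = q'))"

text \<open>The size of a maximum matching (the Max exists whenever B is finite).\<close>
definition max_matching :: "('x \<Rightarrow> 'y \<Rightarrow> bool) \<Rightarrow> 'x set \<Rightarrow> 'y set \<Rightarrow> nat" where
  "max_matching E A B = Max {card M | M. bip_matching E A B M}"

lemma bip_matching_inj_fst: "bip_matching E A B M \<Longrightarrow> inj_on fst M"
  unfolding bip_matching_def inj_on_def by fastforce

lemma bip_matching_inj_snd: "bip_matching E A B M \<Longrightarrow> inj_on snd M"
  unfolding bip_matching_def inj_on_def by fastforce

lemma bip_matching_iff: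
  "bip_matching E A B M \<longleftrightarrow>
     M \<subseteq> A \<times> B \<and> (\<forall>(p, q) \<in> M. E p q) \<and> inj_on fst M \<and> inj_on snd M"
  unfolding bip_matching_def inj_on_def by fastforce

lemma bip_matching_subset:
  assumes "bip_matching E A B M" "M' \<subseteq> M" "fst ` M' \<subseteq> A'"
  shows "bip_matching E A' B M'"
proof -
  have "M' \<subseteq> A' \<times> B" using assms unfolding bip_matching_def by force
  moreover have "\<forall>(p, q) \<in> M'. E p q" using assms(1,2) unfolding bip_matching_def by blast
  moreover have "inj_on fst M'" "inj_on snd M'"
    using inj_on_subset[OF bip_matching_inj_fst[OF assms(1)] assms(2)]
      inj_on_subset[OF bip_matching_inj_snd[OF assms(1)] assms(2)] by simp_all
  ultimately show ?thesis unfolding bip_matching_iff by simp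
qed

lemma bip_matching_Un:
  assumes "bip_matching E A B M1" "bip_matching E A B M2"
    "fst ` M1 \<inter> fst ` M2 = {}" "snd ` M1 \<inter> snd ` M2 = {}"
  shows "bip_matching E A B (M1 \<union> M2)"
  using assms unfolding bip_matching_iff by (auto simp: inj_on_Un)

lemma bip_matching_card_le:
  assumes "finite B" "bip_matching E A B M"
  shows "finite M \<and> card M \<le> card B"
proof -
  have inj: "inj_on snd M" using assms(2) by (rule bip_matching_inj_snd)
  have sub: "snd ` M \<subseteq> B" using assms(2) unfolding bip_matching_def by auto
  have "finite M" using finite_imageD[OF finite_subset[OF sub assms(1)] inj] .
  moreover have "card M \<le> card B"
    using card_image[OF inj] card_mono[OF assms(1) sub] by simp
  ultimately show ?thesis ..
qed

lemma matching_sizes_finite_nonempty: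
  assumes "finite B"
  shows "finite {card M | M. bip_matching E A B M} \<and> {card M | M. bip_matching E A B M} \<noteq> {}"
proof
  have "{card M | M. bip_matching E A B M} \<subseteq> {..card B}"
    using bip_matching_card_le[OF assms] by auto
  thus "finite {card M | M. bip_matching E A B M}" by (rule finite_subset) simp
  have "bip_matching E A B {}" unfolding bip_matching_def by simp
  thus "{card M | M. bip_matching E A B M} \<noteq> {}" by blast
qed

lemma max_matching_ge: "finite B \<Longrightarrow> bip_matching E A B M \<Longrightarrow> card M \<le> max_matching E A B"
  unfolding max_matching_def using matching_sizes_finite_nonempty by (intro Max_ge) auto

lemma max_matching_attained:
  assumes "finite B"
  shows "\<exists>M. bip_matching E A B M \<and> card M = max_matching E A B"
proof -
  have "max_matching E A B \<in> {card M | M. bip_matching E A B M}"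
    unfolding max_matching_def using matching_sizes_finite_nonempty[OF assms] by (intro Max_in) auto
  thus ?thesis by auto
qed

lemma max_matching_no_left: "max_matching E {} B = 0"
proof -
  have "{card M | M. bip_matching E {} B M} = {0}"
    unfolding bip_matching_def by (auto intro: exI[of _ "{}"])
  thus ?thesis unfolding max_matching_def by simp
qed

text \<open>Adding one left node increases the maximum matching size by at most one: at most one edge of a
matching uses the new node.\<close>
lemma max_matching_insert_le:
  assumes "finite B"
  shows "max_matching E (insert p A) B \<le> Suc (max_matching E A B)"
proof -
  obtain M where M: "bip_matching E (insert p A) B M" "card M = max_matching E (insert p A) B"
    using max_matching_attained[OF assms] by blast
  define M0 where "M0 = {z \<in> M. fst z \<noteq> p}"
  have "bip_matching E A B M0" using M(1) unfolding bip_matching_def M0_def by fastforce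
  hence M0_le: "card M0 \<le> max_matching E A B" by (rule max_matching_ge[OF assms])
  have finM: "finite M" using bip_matching_card_le[OF assms M(1)] by simp
  have "inj_on fst (M - M0)" using bip_matching_inj_fst[OF M(1)] by (rule inj_on_subset) blast
  hence "card (M - M0) = card (fst ` (M - M0))" by (rule card_image[symmetric])
  also have "\<dots> \<le> card {p}" by (rule card_mono) (auto simp: M0_def)
  finally have "card (M - M0) \<le> 1" by simp
  moreover have "card M \<le> card M0 + card (M - M0)"
    using card_Un_le[of M0 "M - M0"] by (simp add: Un_absorb1 M0_def)
  ultimately show ?thesis using M(2) M0_le by linarith
qed

lemma card_le_exchange:
  assumes B: "finite B" and M: "bip_matching E A B M"
    and Vs: "finite Vs" and mated: "\<forall>q \<in> Vs. mt q \<noteq> None"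
  shows "card M \<le> card ({(x, q) \<in> M. q \<notin> Vs} \<union> {(x, q). q \<in> Vs \<and> mt q = Some x})"
proof -
  define M1 where "M1 = {(x, q) \<in> M. q \<notin> Vs}"
  define M2 where "M2 = {(x, q). q \<in> Vs \<and> mt q = Some x}"
  define M3 where "M3 = {(x, q) \<in> M. q \<in> Vs}"
  have finM: "finite M" using bip_matching_card_le[OF B M] by simp
  have "M = M1 \<union> M3" "M1 \<inter> M3 = {}" unfolding M1_def M3_def by auto
  hence card_M: "card M = card M1 + card M3" using finM by (metis card_Un_disjoint finite_Un)
  have "inj_on snd M3" using bip_matching_inj_snd[OF M] by (rule inj_on_subset) (auto simp: M3_def)
  hence "card M3 = card (snd ` M3)" by (rule card_image[symmetric])
  also have "\<dots> \<le> card Vs" using Vs by (intro card_mono) (auto simp: M3_def)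
  finally have card_M3: "card M3 \<le> card Vs" .
  have M2_image: "M2 = (\<lambda>q. (the (mt q), q)) ` Vs" unfolding M2_def using mated by force
  hence card_M2: "card M2 = card Vs" by (simp add: card_image inj_on_def)
  have "finite M1" using finM unfolding M1_def by (rule rev_finite_subset) auto
  moreover have "finite M2" using Vs M2_image by simp
  moreover have "M1 \<inter> M2 = {}" unfolding M1_def M2_def by auto
  ultimately have "card (M1 \<union> M2) = card M1 + card M2" by (rule card_Un_disjoint)
  thus ?thesis unfolding M1_def[symmetric] M2_def[symmetric] using card_M card_M3 card_M2 by linarith
qed

section \<open>Mate arrays\<close>

text \<open>Kuhn's algorithm represents a matching by the mate array mt of the right nodes.\<close>
definition mates_adjacent :: "('x \<Rightarrow> 'y list) \<Rightarrow> ('y \<Rightarrow> 'x option) \<Rightarrow> bool" where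
  "mates_adjacent adj mt \<longleftrightarrow> (\<forall>q x. mt q = Some x \<longrightarrow> q \<in> set (adj x))"

definition mate_inv :: "('x \<Rightarrow> 'y list) \<Rightarrow> 'x set \<Rightarrow> ('y \<Rightarrow> 'x option) \<Rightarrow> bool" where
  "mate_inv adj A mt \<longleftrightarrow> inj_on mt (dom mt) \<and> mates_adjacent adj mt \<and> ran mt \<subseteq> A"

definition matched_count :: "'y list \<Rightarrow> ('y \<Rightarrow> 'x option) \<Rightarrow> nat" where
  "matched_count Q mt = card (set Q \<inter> dom mt)"

definition mate_graph :: "('y \<Rightarrow> 'x option) \<Rightarrow> ('x \<times> 'y) set" where
  "mate_graph mt = {(x, q). mt q = Some x}"

lemma mate_graph_matching:
  assumes adjE: "\<forall>x. set (adj x) = {q \<in> set Q. E x q}" and inv: "mate_inv adj A mt"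
  shows "bip_matching E A (set Q) (mate_graph mt) \<and> card (mate_graph mt) = matched_count Q mt"
proof
  have inj: "\<And>q q' x. mt q = Some x \<Longrightarrow> mt q' = Some x \<Longrightarrow> q = q'"
    using inv unfolding mate_inv_def inj_on_def by (metis domI)
  have edge: "\<And>x q. mt q = Some x \<Longrightarrow> q \<in> set Q \<and> E x q \<and> x \<in> A"
    using inv adjE unfolding mate_inv_def mates_adjacent_def ran_def by blast
  show "bip_matching E A (set Q) (mate_graph mt)"
    unfolding bip_matching_def mate_graph_def using edge inj by auto
  have "mate_graph mt = (\<lambda>q. (the (mt q), q)) ` (set Q \<inter> dom mt)"
    unfolding mate_graph_def using edge by force
  moreover have "inj_on (\<lambda>q. (the (mt q), q)) (set Q \<inter> dom mt)" by (rule inj_onI) simp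
  ultimately show "card (mate_graph mt) = matched_count Q mt"
    unfolding matched_count_def by (simp add: card_image)
qed

lemma matched_count_le_max:
  "\<forall>x. set (adj x) = {q \<in> set Q. E x q} \<Longrightarrow> mate_inv adj A mt
   \<Longrightarrow> matched_count Q mt \<le> max_matching E A (set Q)"
  using mate_graph_matching[of adj Q E A mt] max_matching_ge[of "set Q" E A "mate_graph mt"]
  by simp

section \<open>The augmenting-path search\<close>

text \<open>The number of unvisited right nodes; it bounds the recursion depth of aug and serves as the
potential in the running-time analysis.\<close>
definition unvisited :: "'y list \<Rightarrow> ('y \<Rightarrow> bool) \<Rightarrow> nat" where
  "unvisited Q vs = card {q \<in> set Q. \<not> vs q}"

lemma unvisited_visit:
  assumes "q \<in> set Q" "\<not> vs q"
  shows "unvisited Q vs = Suc (unvisited Q (vs(q := True)))"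
proof -
  have "{q' \<in> set Q. \<not> (vs(q := True)) q'} = {q' \<in> set Q. \<not> vs q'} - {q}" by auto
  moreover have "0 < card {q' \<in> set Q. \<not> vs q'}" using assms by (auto simp: card_gt_0_iff)
  ultimately show ?thesis unfolding unvisited_def using assms by simp
qed

lemma unvisited_antimono: "vs \<le> vs' \<Longrightarrow> unvisited Q vs' \<le> unvisited Q vs"
  unfolding unvisited_def le_fun_def by (intro card_mono) auto

text \<open>Initially the potential is at most |Q|, which is why fuel Suc |Q| suffices in every phase.\<close>
lemma unvisited_le_length: "unvisited Q vs \<le> length Q"
proof -
  have "unvisited Q vs \<le> card (set Q)" unfolding unvisited_def by (intro card_mono) auto
  thus ?thesis using card_length[of Q] by linarith
qed

lemma aug_failure_unchanged:
  "aug n adj mt vs p qs = (False, mt', vs') \<Longrightarrow> mt' = mt \<and> vs \<le> vs'"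
proof (induction n adj mt vs p qs arbitrary: mt' vs' rule: aug.induct)
  case (3 n adj mt vs p q qs)
  show ?case
  proof (cases "vs q")
    case True thus ?thesis using 3 by simp
  next
    case fresh: False
    then obtain p' where mate: "mt q = Some p'" using 3(4) by (cases "mt q") auto
    obtain b m1 v1 where rec: "aug n adj mt (vs(q := True)) p' (adj p') = (b, m1, v1)"
      by (metis prod_cases3)
    with 3(4) fresh mate have b: "b = False" by (cases b) simp_all
    with 3(4) fresh mate rec have rest: "aug (Suc n) adj m1 v1 p qs = (False, mt', vs')" by simp
    have rec': "aug n adj mt (vs(q := True)) p' (adj p') = (False, m1, v1)" using rec b by simp
    have "m1 = mt \<and> vs(q := True) \<le> v1" using 3(2)[OF fresh mate rec'] .
    moreover have "mt' = m1 \<and> v1 \<le> vs'" using 3(3)[OF fresh mate rec[symmetric] b refl rest] .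
    ultimately show ?thesis by (auto simp: le_fun_def)
  qed
qed simp_all

text \<open>The nodes visited between vs and vs' form a Hungarian tree: each is matched, and all neighbours of
its mate have been visited as well.\<close>
definition search_closed ::
  "('x \<Rightarrow> 'y list) \<Rightarrow> ('y \<Rightarrow> 'x option) \<Rightarrow> ('y \<Rightarrow> bool) \<Rightarrow> ('y \<Rightarrow> bool) \<Rightarrow> bool" where
  "search_closed adj mt vs vs' \<longleftrightarrow>
     (\<forall>q. vs' q \<and> \<not> vs q \<longrightarrow> (\<exists>x. mt q = Some x \<and> (\<forall>q' \<in> set (adj x). vs' q')))"

lemma search_closed_trans:
  assumes "search_closed adj mt vs v1" "search_closed adj mt v1 v2" "v1 \<le> v2"
  shows "search_closed adj mt vs v2"
  unfolding search_closed_def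
proof (intro allI impI)
  fix q assume q: "v2 q \<and> \<not> vs q"
  have grow: "\<And>q'. v1 q' \<Longrightarrow> v2 q'" using assms(3) by (simp add: le_fun_def)
  show "\<exists>x. mt q = Some x \<and> (\<forall>q' \<in> set (adj x). v2 q')"
  proof (cases "v1 q")
    case True thus ?thesis using assms(1) q grow unfolding search_closed_def by blast
  next
    case False thus ?thesis using assms(2) q unfolding search_closed_def by blast
  qed
qed

lemma search_closed_visit:
  "mt q = Some p' \<Longrightarrow> \<forall>q' \<in> set (adj p'). v1 q' \<Longrightarrow> search_closed adj mt (vs(q := True)) v1
   \<Longrightarrow> search_closed adj mt vs v1"
  unfolding search_closed_def by (metis fun_upd_apply)

lemma aug_failure_closed:
  assumes "aug n adj mt vs p qs = (False, mt', vs')" "\<forall>x. set (adj x) \<subseteq> set Q"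
    "set qs \<subseteq> set Q" "unvisited Q vs < n"
  shows "(\<forall>q \<in> set qs. vs' q) \<and> search_closed adj mt vs vs'"
  using assms
proof (induction n adj mt vs p qs arbitrary: mt' vs' rule: aug.induct)
  case (2 n adj mt vs p)
  thus ?case by (simp add: search_closed_def)
next
  case (3 n adj mt vs p q qs)
  have qQ: "q \<in> set Q" using 3(6) by simp
  show ?case
  proof (cases "vs q")
    case True
    hence rest: "aug (Suc n) adj mt vs p qs = (False, mt', vs')" using 3(4) by simp
    have "vs' q" using aug_failure_unchanged[OF rest] True by (simp add: le_fun_def)
    thus ?thesis using 3(1)[OF True rest 3(5)] 3(6,7) by simp
  next
    case fresh: False
    then obtain p' where mate: "mt q = Some p'" using 3(4) by (cases "mt q") auto
    obtain b m1 v1 where rec: "aug n adj mt (vs(q := True)) p' (adj p') = (b, m1, v1)"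
      by (metis prod_cases3)
    with 3(4) fresh mate have b: "b = False" by (cases b) simp_all
    with 3(4) fresh mate rec have rest: "aug (Suc n) adj m1 v1 p qs = (False, mt', vs')" by simp
    have rec': "aug n adj mt (vs(q := True)) p' (adj p') = (False, m1, v1)" using rec b by simp
    have m1: "m1 = mt" "vs(q := True) \<le> v1" "v1 \<le> vs'"
      using aug_failure_unchanged[OF rec'] aug_failure_unchanged[OF rest] by simp_all
    have fuel1: "unvisited Q (vs(q := True)) < n" using unvisited_visit[of q Q vs, OF qQ fresh] 3(7) by simp
    have fuel2: "unvisited Q v1 < Suc n" using unvisited_antimono[OF m1(2), of Q] fuel1 by simp
    have inner: "(\<forall>q' \<in> set (adj p'). v1 q') \<and> search_closed adj mt (vs(q := True)) v1"
      using 3(2)[OF fresh mate rec' 3(5) _ fuel1] 3(5) by blast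
    have outer: "(\<forall>q' \<in> set qs. vs' q') \<and> search_closed adj mt v1 vs'"
      using 3(3)[OF fresh mate rec[symmetric] b refl rest 3(5) _ fuel2] 3(6) m1(1) by simp
    have "vs' q" using m1(2,3) by (simp add: le_fun_def)
    moreover have "search_closed adj mt vs v1"
      using search_closed_visit[of mt q p' adj v1 vs] mate inner by blast
    hence "search_closed adj mt vs vs'" using search_closed_trans m1(3) outer by blast
    ultimately show ?thesis using outer by simp
  qed
qed simp

text \<open>Specification of a successful search from p: visited nodes keep their mates, adjacency and
injectivity are preserved (apart from the old mates of p, which the caller re-matches), one more
right node is matched, and only p may appear as a new mate.\<close>
definition augments ::
  "('x \<Rightarrow> 'y list) \<Rightarrow> 'y list \<Rightarrow> 'x \<Rightarrow> ('y \<Rightarrow> 'x option) \<Rightarrow> ('y \<Rightarrow> bool) \<Rightarrow> ('y \<Rightarrow> 'x option)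
     \<Rightarrow> bool" where
  "augments adj Q p mt vs mt' \<longleftrightarrow> (\<forall>q. vs q \<longrightarrow> mt' q = mt q) \<and> mates_adjacent adj mt'
     \<and> inj_on mt' (dom mt' - {q. mt q = Some p})
     \<and> matched_count Q mt' = Suc (matched_count Q mt) \<and> ran mt' \<subseteq> insert p (ran mt)"

lemma augments_visited_antimono:
  "vs \<le> vs' \<Longrightarrow> augments adj Q p mt vs' mt' \<Longrightarrow> augments adj Q p mt vs mt'"
  unfolding augments_def le_fun_def le_bool_def by blast

lemma ran_update_subset: "ran (m(a \<mapsto> b)) \<subseteq> insert b (ran m)"
  by (auto simp: ran_def)

lemma augments_free:
  assumes qadj: "q \<in> set (adj p)" and adjQ: "set (adj p) \<subseteq> set Q"
    and free: "mt q = None" and fresh: "\<not> vs q"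
    and inj: "inj_on mt (dom mt)" and adjacent: "mates_adjacent adj mt"
  shows "augments adj Q p mt vs (mt(q \<mapsto> p))"
  unfolding augments_def
proof (intro conjI)
  show "\<forall>q'. vs q' \<longrightarrow> (mt(q \<mapsto> p)) q' = mt q'" using fresh by auto
  show "mates_adjacent adj (mt(q \<mapsto> p))" using adjacent qadj by (simp add: mates_adjacent_def)
  show "inj_on (mt(q \<mapsto> p)) (dom (mt(q \<mapsto> p)) - {q'. mt q' = Some p})"
    using inj free unfolding inj_on_def by (auto simp: dom_def)
  have "set Q \<inter> dom (mt(q \<mapsto> p)) = insert q (set Q \<inter> dom mt)" using qadj adjQ by auto
  thus "matched_count Q (mt(q \<mapsto> p)) = Suc (matched_count Q mt)"
    unfolding matched_count_def using free by (simp add: domIff)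
  show "ran (mt(q \<mapsto> p)) \<subseteq> insert p (ran mt)" by (rule ran_update_subset)
qed

text \<open>The recursive search that re-matches the mate p' of q creates no new mate for p: by
injectivity the only right node mated to p afterwards (besides q) is an old mate of p, since those
are visited and keep their mates.\<close>
lemma augments_no_new_mate:
  assumes mate: "mt q = Some p'" and p'p: "p' \<noteq> p" and pvis: "\<forall>q'. mt q' = Some p \<longrightarrow> vs q'"
    and keep: "\<And>q'. vs q' \<or> q' = q \<Longrightarrow> m1 q' = mt q'"
    and inj1: "inj_on m1 (dom m1 - {q})" and ran1: "ran m1 \<subseteq> insert p' (ran mt)"
    and new: "m1 q2 = Some p" "q2 \<noteq> q"
  shows "mt q2 = Some p"
proof -
  have "p \<in> ran mt" using ran1 p'p new(1) by (auto simp: ran_def)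
  then obtain q3 where q3: "mt q3 = Some p" by (auto simp: ran_def)
  hence "m1 q3 = Some p" using keep pvis by simp
  moreover have "q3 \<noteq> q" using q3 mate p'p by auto
  ultimately have "q2 = q3" using inj1 new unfolding inj_on_def by (metis DiffI domI singletonD)
  thus ?thesis using q3 by simp
qed

text \<open>Recursive case: the mate p' of q was re-matched elsewhere, so q can be given to p.\<close>
lemma augments_extend:
  assumes mate: "mt q = Some p'" and qadj: "q \<in> set (adj p)" and fresh: "\<not> vs q"
    and inj: "inj_on mt (dom mt)" and pvis: "\<forall>q'. mt q' = Some p \<longrightarrow> vs q'"
    and rec: "augments adj Q p' mt (vs(q := True)) m1"
  shows "augments adj Q p mt vs (m1(q \<mapsto> p))"
proof -
  have p'p: "p' \<noteq> p" using mate fresh pvis by auto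
  have mates_p': "{q'. mt q' = Some p'} = {q}"
    using mate inj unfolding inj_on_def by (auto simp: dom_def)
  have keep: "\<And>q'. vs q' \<or> q' = q \<Longrightarrow> m1 q' = mt q'" using rec unfolding augments_def by auto
  have inj1: "inj_on m1 (dom m1 - {q})" using rec mates_p' unfolding augments_def by simp
  have ran1: "ran m1 \<subseteq> insert p' (ran mt)" using rec unfolding augments_def by simp
  have m1q: "m1 q = Some p'" using keep[of q] mate by simp
  have no_stray: "mt q2 = Some p" if "m1 q2 = Some p" "q2 \<noteq> q" for q2
    using augments_no_new_mate[OF mate p'p pvis keep inj1 ran1 that] .
  show ?thesis
    unfolding augments_def
  proof (intro conjI)
    show "\<forall>q'. vs q' \<longrightarrow> (m1(q \<mapsto> p)) q' = mt q'" using keep fresh by auto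
    show "mates_adjacent adj (m1(q \<mapsto> p))"
      using rec qadj unfolding augments_def mates_adjacent_def by simp
    show "inj_on (m1(q \<mapsto> p)) (dom (m1(q \<mapsto> p)) - {q'. mt q' = Some p})"
    proof (rule inj_onI)
      fix q1 q2
      assume q1: "q1 \<in> dom (m1(q \<mapsto> p)) - {q'. mt q' = Some p}"
        and q2: "q2 \<in> dom (m1(q \<mapsto> p)) - {q'. mt q' = Some p}"
        and eq: "(m1(q \<mapsto> p)) q1 = (m1(q \<mapsto> p)) q2"
      show "q1 = q2"
      proof (cases "q1 = q \<or> q2 = q")
        case True
        thus ?thesis using eq q1 q2 no_stray by (auto split: if_splits)
      next
        case False
        thus ?thesis using eq q1 q2 inj1 unfolding inj_on_def by auto
      qed
    qed
    have "dom (m1(q \<mapsto> p)) = dom m1" using m1q by auto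
    thus "matched_count Q (m1(q \<mapsto> p)) = Suc (matched_count Q mt)"
      using rec unfolding augments_def matched_count_def by simp
    have "p' \<in> ran mt" using mate by (auto simp: ran_def)
    thus "ran (m1(q \<mapsto> p)) \<subseteq> insert p (ran mt)" using ran_update_subset[of m1 q p] ran1 by blast
  qed
qed

text \<open>A successful search satisfies the specification augments, provided all mates of p are
already visited (at the top level p has no mate at all).\<close>
lemma aug_success:
  assumes "aug n adj mt vs p qs = (True, mt', vs')" "\<forall>x. set (adj x) \<subseteq> set Q"
    "inj_on mt (dom mt)" "mates_adjacent adj mt" "set qs \<subseteq> set (adj p)"
    "\<forall>q. mt q = Some p \<longrightarrow> vs q"
  shows "augments adj Q p mt vs mt'"
  using assms
proof (induction n adj mt vs p qs arbitrary: mt' vs' rule: aug.induct)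
  case (3 n adj mt vs p q qs)
  have qadj: "q \<in> set (adj p)" using 3(8) by simp
  show ?case
  proof (cases "vs q")
    case True
    hence rest: "aug (Suc n) adj mt vs p qs = (True, mt', vs')" using 3(4) by simp
    show ?thesis using 3(1)[OF True rest 3(5,6,7) _ 3(9)] 3(8) by simp
  next
    case fresh: False
    show ?thesis
    proof (cases "mt q")
      case None
      hence mt': "mt' = mt(q \<mapsto> p)" using 3(4) fresh by simp
      have "set (adj p) \<subseteq> set Q" using 3(5) by blast
      thus ?thesis unfolding mt' using qadj None fresh 3(6,7) by (intro augments_free)
    next
      case (Some p')
      obtain b m1 v1 where rec: "aug n adj mt (vs(q := True)) p' (adj p') = (b, m1, v1)"
        by (metis prod_cases3)
      show ?thesis
      proof (cases b)
        case True
        have rec': "aug n adj mt (vs(q := True)) p' (adj p') = (True, m1, v1)" using rec True by simp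
        have "\<forall>q'. mt q' = Some p' \<longrightarrow> (vs(q := True)) q'"
          using 3(6) Some unfolding inj_on_def by (auto simp: dom_def)
        hence "augments adj Q p' mt (vs(q := True)) m1"
          using 3(2)[OF fresh Some rec' 3(5,6,7) subset_refl] by blast
        moreover have mt': "mt' = m1(q \<mapsto> p)" using 3(4) fresh Some rec True by simp
        ultimately show ?thesis
          unfolding mt' using Some qadj fresh 3(6,9) by (intro augments_extend)
      next
        case False
        have rest: "aug (Suc n) adj m1 v1 p qs = (True, mt', vs')" using 3(4) fresh Some rec False by simp
        have rec': "aug n adj mt (vs(q := True)) p' (adj p') = (False, m1, v1)" using rec False by simp
        have m1: "m1 = mt" "vs(q := True) \<le> v1" using aug_failure_unchanged[OF rec'] by simp_all
        hence "vs \<le> v1" by (auto simp: le_fun_def)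
        moreover have "augments adj Q p mt v1 mt'"
          using 3(3)[OF fresh Some rec[symmetric] _ refl rest 3(5)] False 3(6,7,8,9) m1 \<open>vs \<le> v1\<close>
          by (simp add: le_fun_def)
        ultimately show ?thesis by (rule augments_visited_antimono)
      qed
    qed
  qed
qed simp_all

section \<open>Kuhn's algorithm computes the maximum matching size\<close>

text \<open>If the search from p failed with Hungarian tree V, the edges of any matching of A plus p that
avoid V, together with the mate edges into V, form a matching of A: edges leaving p or a tree
mate always end inside the tree.\<close>
lemma exchange_matching:
  assumes adjE: "\<forall>x. set (adj x) = {q \<in> set Q. E x q}" and inv: "mate_inv adj A mt"
    and Vp: "\<forall>q \<in> set (adj p). V q" and closed: "search_closed adj mt (\<lambda>_. False) V"
    and M: "bip_matching E (insert p A) (set Q) M"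
  shows "bip_matching E A (set Q) ({(x, q) \<in> M. \<not> V q} \<union> {(x, q). V q \<and> mt q = Some x})"
proof -
  define M1 where "M1 = {(x, q) \<in> M. \<not> V q}"
  define M2 where "M2 = {(x, q). V q \<and> mt q = Some x}"
  have tree: "\<And>q. V q \<Longrightarrow> \<exists>x. mt q = Some x \<and> (\<forall>q' \<in> set (adj x). V q')"
    using closed unfolding search_closed_def by simp
  have adjM: "q \<in> set (adj x)" if "(x, q) \<in> M" for x q
  proof -
    have "q \<in> set Q" "E x q" using M that unfolding bip_matching_def by auto
    thus ?thesis using adjE by simp
  qed
  have M_into_tree: "V q" if "(x, q) \<in> M" "x = p \<or> (\<exists>q'. V q' \<and> mt q' = Some x)" for x q
    using that Vp tree adjM by (metis option.inject)
  have "fst ` M1 \<subseteq> A"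
  proof
    fix x assume "x \<in> fst ` M1"
    then obtain q where xq: "(x, q) \<in> M" "\<not> V q" unfolding M1_def by auto
    hence "x \<noteq> p" using M_into_tree by blast
    moreover have "x \<in> insert p A" using M xq(1) unfolding bip_matching_def by auto
    ultimately show "x \<in> A" by simp
  qed
  hence M1: "bip_matching E A (set Q) M1" by (intro bip_matching_subset[OF M]) (auto simp: M1_def)
  have mtG: "bip_matching E A (set Q) (mate_graph mt)" using mate_graph_matching[OF adjE inv] by simp
  have M2: "bip_matching E A (set Q) M2"
    using inv by (intro bip_matching_subset[OF mtG]) (auto simp: M2_def mate_graph_def mate_inv_def ran_def)
  have "fst ` M1 \<inter> fst ` M2 = {}" "snd ` M1 \<inter> snd ` M2 = {}"
    unfolding M1_def M2_def using M_into_tree by fastforce+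
  thus ?thesis using bip_matching_Un[OF M1 M2] unfolding M1_def M2_def by blast
qed

lemma failed_search_exchange:
  assumes adjE: "\<forall>x. set (adj x) = {q \<in> set Q. E x q}" and inv: "mate_inv adj A mt"
    and Vp: "\<forall>q \<in> set (adj p). V q" and closed: "search_closed adj mt (\<lambda>_. False) V"
    and M: "bip_matching E (insert p A) (set Q) M"
  shows "card M \<le> max_matching E A (set Q)"
proof -
  have mated: "\<forall>q \<in> {q. V q}. mt q \<noteq> None"
    using closed unfolding search_closed_def by auto
  have "{q. V q} \<subseteq> set Q"
    using mated inv adjE unfolding mate_inv_def mates_adjacent_def by fastforce
  hence "finite {q. V q}" by (rule finite_subset) simp
  hence "card M \<le> card ({(x, q) \<in> M. q \<notin> {q. V q}} \<union> {(x, q). q \<in> {q. V q} \<and> mt q = Some x})"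
    using card_le_exchange[OF _ M _ mated] by simp
  also have "\<dots> \<le> max_matching E A (set Q)"
    using max_matching_ge[OF _ exchange_matching[OF adjE inv Vp closed M]] by simp
  finally show ?thesis .
qed

lemma kuhn_phase:
  assumes adjE: "\<forall>x. set (adj x) = {q \<in> set Q. E x q}" and inv: "mate_inv adj A mt"
    and opt: "matched_count Q mt = max_matching E A (set Q)" and new: "p \<notin> A"
    and mt': "mt' = fst (snd (aug (Suc (length Q)) adj mt (\<lambda>_. False) p (adj p)))"
  shows "mate_inv adj (insert p A) mt' \<and> matched_count Q mt' = max_matching E (insert p A) (set Q)"
proof -
  have adjQ: "\<forall>x. set (adj x) \<subseteq> set Q" using adjE by auto
  have unmatched: "{q. mt q = Some p} = {}" using inv new unfolding mate_inv_def ran_def by auto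
  obtain b vs' where res: "aug (Suc (length Q)) adj mt (\<lambda>_. False) p (adj p) = (b, mt', vs')"
    using mt' by (metis prod.collapse)
  show ?thesis
  proof (cases b)
    case True
    hence "aug (Suc (length Q)) adj mt (\<lambda>_. False) p (adj p) = (True, mt', vs')" using res by simp
    hence "augments adj Q p mt (\<lambda>_. False) mt'"
      using inv unmatched adjQ unfolding mate_inv_def by (intro aug_success) auto
    hence inv': "mate_inv adj (insert p A) mt'"
      and count: "matched_count Q mt' = Suc (matched_count Q mt)"
      using inv unmatched unfolding augments_def mate_inv_def by auto
    have "max_matching E (insert p A) (set Q) \<le> Suc (max_matching E A (set Q))"
      by (rule max_matching_insert_le) simp
    thus ?thesis using matched_count_le_max[OF adjE inv'] inv' count opt by simp
  next
    case False
    hence res': "aug (Suc (length Q)) adj mt (\<lambda>_. False) p (adj p) = (False, mt', vs')"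
      using res by simp
    have same: "mt' = mt" using aug_failure_unchanged[OF res'] by simp
    have closed: "(\<forall>q \<in> set (adj p). vs' q) \<and> search_closed adj mt (\<lambda>_. False) vs'"
      using aug_failure_closed[OF res' adjQ] adjQ unvisited_le_length[of Q "\<lambda>_. False"] by auto
    obtain M where M: "bip_matching E (insert p A) (set Q) M"
      "card M = max_matching E (insert p A) (set Q)"
      using max_matching_attained by blast
    have "max_matching E (insert p A) (set Q) \<le> matched_count Q mt"
      using failed_search_exchange[OF adjE inv _ _ M(1)] closed M(2) opt by metis
    moreover have inv': "mate_inv adj (insert p A) mt" using inv unfolding mate_inv_def by auto
    ultimately show ?thesis using matched_count_le_max[OF adjE inv'] same by simp
  qed
qed

lemma kuhn_maximum:
  assumes adjE: "\<forall>x. set (adj x) = {q \<in> set Q. E x q}"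
  shows "distinct ps \<Longrightarrow> set ps \<inter> A = {} \<Longrightarrow> mate_inv adj A mt
    \<Longrightarrow> matched_count Q mt = max_matching E A (set Q)
    \<Longrightarrow> matched_count Q (kuhn adj Q mt ps) = max_matching E (A \<union> set ps) (set Q)"
proof (induction ps arbitrary: A mt)
  case (Cons p ps)
  define mt' where "mt' = fst (snd (aug (Suc (length Q)) adj mt (\<lambda>_. False) p (adj p)))"
  have "mate_inv adj (insert p A) mt' \<and> matched_count Q mt' = max_matching E (insert p A) (set Q)"
    using Cons.prems by (intro kuhn_phase[OF adjE _ _ _ mt'_def]) auto
  hence "matched_count Q (kuhn adj Q mt' ps) = max_matching E (insert p A \<union> set ps) (set Q)"
    using Cons.IH[of "insert p A" mt'] Cons.prems(1,2) by simp
  thus ?case unfolding mt'_def by simp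
qed simp

lemma matching_size_alg_correct:
  assumes "distinct P" "distinct Q"
  shows "matching_size_alg th n1 n2 P Q = max_matching (\<lambda>p q. th (n1 p) (n2 q)) (set P) (set Q)"
proof -
  define adj where "adj = adj_of th n1 n2 Q"
  define E where "E = (\<lambda>p q. th (n1 p) (n2 q))"
  define mt where "mt = kuhn adj Q (\<lambda>_. None) P"
  have adjE: "\<forall>x. set (adj x) = {q \<in> set Q. E x q}" unfolding adj_def adj_of_def E_def by auto
  have start: "mate_inv adj {} (\<lambda>_. None)" unfolding mate_inv_def mates_adjacent_def by simp
  have "matched_count Q mt = max_matching E ({} \<union> set P) (set Q)" unfolding mt_def
    using kuhn_maximum[OF adjE assms(1) _ start] by (simp add: matched_count_def max_matching_no_left)
  moreover have "length (filter (\<lambda>q. mt q \<noteq> None) Q) = matched_count Q mt"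
    unfolding matched_count_def using distinct_card[OF distinct_filter[OF assms(2)]]
    by (simp add: dom_def Int_def)
  ultimately show ?thesis unfolding matching_size_alg_def Let_def adj_def E_def mt_def by simp
qed

section \<open>Correctness of the synonymy computation\<close>

lemma max_matching_size_eq:
  "max_matching_size th S1 S2 P Q = max_matching (\<lambda>p q. th (xname S1 p) (xname S2 q)) P Q"
  unfolding max_matching_size_def max_matching_def is_matching_def bip_matching_def ..

text \<open>Every x-component lies in its own neighborhood, so the denominator of phi_BG is positive.\<close>
lemma self_in_neighborhood: "x \<in> xcomps S \<Longrightarrow> x \<in> neighborhood S x v"
  unfolding neighborhood_def CC_def veryclose_def by (simp add: zero_enat_def)

lemma similar_alg_correct:
  assumes "e1 \<in> xcomps S1" "distinct P1" "set P1 = neighborhood S1 e1 v"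
    and "distinct P2" "set P2 = neighborhood S2 e2 v"
  shows "similar_alg th (xname S1) (xname S2) P1 P2 \<longleftrightarrow> similar_at th S1 S2 e1 e2 v"
proof -
  define k where "k = max_matching_size th S1 S2 (neighborhood S1 e1 v) (neighborhood S2 e2 v)"
  have alg: "matching_size_alg th (xname S1) (xname S2) P1 P2 = k"
    unfolding k_def max_matching_size_eq
    using matching_size_alg_correct[OF assms(2,4)] assms(3,5) by simp
  have card: "card (neighborhood S1 e1 v) = length P1" "card (neighborhood S2 e2 v) = length P2"
    using assms(2-5) distinct_card by metis+
  have "length P1 > 0" using self_in_neighborhood[OF assms(1), of v] assms(3) by (cases P1) auto
  hence pos: "real (length P1) + real (length P2) > 0" by linarith
  have "similar_at th S1 S2 e1 e2 v \<longleftrightarrow> 1 / 2 < 2 * real k / (real (length P1) + real (length P2))"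
    unfolding similar_at_def phi_BG_def Let_def k_def[symmetric] card by simp
  also have "\<dots> \<longleftrightarrow> real (length P1) + real (length P2) < 4 * real k"
    using pos by (simp add: field_simps)
  finally show ?thesis unfolding similar_alg_def alg by linarith
qed

lemma syn_upto_alg_correct:
  "(\<forall>w \<le> v. similar_alg th n1 n2 (nb1 e1 w) (nb2 e2 w) \<longleftrightarrow> sim w) \<Longrightarrow>
   syn_upto_alg th n1 n2 nb1 nb2 e1 e2 v \<longleftrightarrow> (\<forall>w \<le> v. sim w)"
  by (induction v) (auto simp: le_Suc_eq)

lemma all_syn_alg_eq:
  "all_syn_alg th n1 n2 nb1 nb2 u cs1 cs2
   = [((e1, e2), syn_upto_alg th n1 n2 nb1 nb2 e1 e2 u). e1 \<leftarrow> cs1, e2 \<leftarrow> cs2]"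
proof -
  have row: "syn_row_alg th n1 n2 nb1 nb2 u e1 es
      = map (\<lambda>e2. ((e1, e2), syn_upto_alg th n1 n2 nb1 nb2 e1 e2 u)) es" for e1 es
    by (induction es) auto
  show ?thesis by (induction cs1) (auto simp: row)
qed

lemma all_syn_alg_correct:
  assumes s1: "set cs1 = complex_elems S1" and s2: "set cs2 = complex_elems S2"
    and n1: "\<forall>x \<in> xcomps S1. \<forall>v \<le> u. distinct (nb1 x v) \<and> set (nb1 x v) = neighborhood S1 x v"
    and n2: "\<forall>y \<in> xcomps S2. \<forall>v \<le> u. distinct (nb2 y v) \<and> set (nb2 y v) = neighborhood S2 y v"
  shows "all_syn_alg th (xname S1) (xname S2) nb1 nb2 u cs1 cs2
         = [((e1, e2), synonymous th S1 S2 e1 e2 u). e1 \<leftarrow> cs1, e2 \<leftarrow> cs2]"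
proof -
  have "syn_upto_alg th (xname S1) (xname S2) nb1 nb2 e1 e2 u = synonymous th S1 S2 e1 e2 u"
    if "e1 \<in> set cs1" "e2 \<in> set cs2" for e1 e2
  proof -
    have x: "e1 \<in> xcomps S1" "e2 \<in> xcomps S2" using that s1 s2 unfolding complex_elems_def by auto
    have "\<forall>w \<le> u. similar_alg th (xname S1) (xname S2) (nb1 e1 w) (nb2 e2 w)
        \<longleftrightarrow> similar_at th S1 S2 e1 e2 w"
    proof (intro allI impI)
      fix w assume "w \<le> u"
      thus "similar_alg th (xname S1) (xname S2) (nb1 e1 w) (nb2 e2 w) \<longleftrightarrow> similar_at th S1 S2 e1 e2 w"
        using x n1 n2 by (intro similar_alg_correct) auto
    qed
    thus ?thesis unfolding synonymous_def by (rule syn_upto_alg_correct)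
  qed
  thus ?thesis unfolding all_syn_alg_eq by (auto intro!: arg_cong[where f = concat] map_cong)
qed

section \<open>Running time\<close>

text \<open>Amortised cost of one search: every newly visited node pays L + 2 from the potential, which
covers the scan of the adjacency list of its mate.\<close>
lemma T_aug_amortized:
  assumes "\<forall>x. set (adj x) \<subseteq> set Q \<and> length (adj x) \<le> L" "set qs \<subseteq> set Q"
  shows "T_aug n adj mt vs p qs + (L + 2) * unvisited Q (snd (snd (aug n adj mt vs p qs)))
     \<le> (L + 2) * unvisited Q vs + length qs + 1"
  using assms
proof (induction n adj mt vs p qs rule: aug.induct)
  case (3 n adj mt vs p q qs)
  have qQ: "q \<in> set Q" using 3(5) by simp
  show ?case
  proof (cases "vs q")
    case True thus ?thesis using 3(1)[OF True 3(4)] 3(5) by simp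
  next
    case fresh: False
    have pay: "(L + 2) * unvisited Q vs = (L + 2) * unvisited Q (vs(q := True)) + L + 2"
      using unvisited_visit[of q Q vs, OF qQ fresh] by simp
    show ?thesis
    proof (cases "mt q")
      case None
      have eqs: "T_aug (Suc n) adj mt vs p (q # qs) = 2"
        "snd (snd (aug (Suc n) adj mt vs p (q # qs))) = vs(q := True)"
        using fresh None by simp_all
      show ?thesis unfolding eqs using pay by linarith
    next
      case (Some p')
      obtain b m1 v1 where rec: "aug n adj mt (vs(q := True)) p' (adj p') = (b, m1, v1)"
        by (metis prod_cases3)
      have adj': "set (adj p') \<subseteq> set Q" "length (adj p') \<le> L" using 3(4) by auto
      have inner: "T_aug n adj mt (vs(q := True)) p' (adj p') + (L + 2) * unvisited Q v1
          \<le> (L + 2) * unvisited Q (vs(q := True)) + length (adj p') + 1"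
        using 3(2)[OF fresh Some 3(4) adj'(1)] unfolding rec by (simp add: fun_upd_def)
      show ?thesis
      proof (cases b)
        case True
        have eqs: "T_aug (Suc n) adj mt vs p (q # qs) = T_aug n adj mt (vs(q := True)) p' (adj p') + 2"
          "snd (snd (aug (Suc n) adj mt vs p (q # qs))) = v1"
          using fresh Some rec True by simp_all
        show ?thesis unfolding eqs using inner pay adj'(2) by linarith
      next
        case False
        have "T_aug (Suc n) adj m1 v1 p qs
            + (L + 2) * unvisited Q (snd (snd (aug (Suc n) adj m1 v1 p qs)))
            \<le> (L + 2) * unvisited Q v1 + length qs + 1"
          using 3(3)[OF fresh Some rec[symmetric] _ refl 3(4)] False 3(5) by simp
        moreover have eqs: "T_aug (Suc n) adj mt vs p (q # qs)
            = 1 + T_aug n adj mt (vs(q := True)) p' (adj p') + T_aug (Suc n) adj m1 v1 p qs"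
          "snd (snd (aug (Suc n) adj mt vs p (q # qs))) = snd (snd (aug (Suc n) adj m1 v1 p qs))"
          using fresh Some rec False by simp_all
        ultimately show ?thesis unfolding eqs using inner pay adj'(2) by simp
      qed
    qed
  qed
qed simp_all

lemma T_aug_phase:
  assumes "adj = adj_of th n1 n2 Q"
  shows "T_aug (Suc (length Q)) adj mt (\<lambda>_. False) p (adj p) \<le> (length Q + 3) * length Q + 1"
proof -
  have adjQ: "\<forall>x. set (adj x) \<subseteq> set Q \<and> length (adj x) \<le> length Q"
    unfolding assms adj_of_def by auto
  have "T_aug (Suc (length Q)) adj mt (\<lambda>_. False) p (adj p)
      \<le> (length Q + 2) * unvisited Q (\<lambda>_. False) + length (adj p) + 1"
    using T_aug_amortized[OF adjQ, where qs="adj p" and n="Suc (length Q)" and mt=mt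
        and vs="\<lambda>_. False" and p=p] adjQ
    by simp
  also have "\<dots> \<le> (length Q + 2) * length Q + length Q + 1"
    using unvisited_le_length[of Q] adjQ by (intro add_mono mult_le_mono) auto
  finally show ?thesis by (simp add: algebra_simps)
qed

lemma T_build_adj_eq: "T_build_adj P Q = length P * (length Q + 2) + 1"
  by (induction P) auto

lemma T_kuhn_bound:
  "(\<And>p mt. T_aug (Suc (length Q)) adj mt (\<lambda>_. False) p (adj p) \<le> B) \<Longrightarrow>
   T_kuhn adj Q mt ps \<le> length ps * (length Q + B + 1) + 1"
proof (induction ps arbitrary: mt)
  case (Cons p ps)
  let ?mt' = "fst (snd (aug (Suc (length Q)) adj mt (\<lambda>_. False) p (adj p)))"
  have "T_aug (Suc (length Q)) adj mt (\<lambda>_. False) p (adj p) \<le> B" by (rule Cons.prems)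
  moreover have "T_kuhn adj Q ?mt' ps \<le> length ps * (length Q + B + 1) + 1"
    by (rule Cons.IH[OF Cons.prems])
  ultimately show ?case by simp
qed simp

lemma T_similar_alg_bound:
  assumes "length P \<le> q" "length Q \<le> q"
  shows "T_similar_alg th n1 n2 P Q \<le> 8 * (q + 1) ^ 3"
proof -
  define adj where "adj = adj_of th n1 n2 Q"
  have "T_kuhn adj Q (\<lambda>_. None) P \<le> length P * (length Q + ((length Q + 3) * length Q + 1) + 1) + 1"
    using T_aug_phase[OF adj_def] by (intro T_kuhn_bound)
  also have "\<dots> \<le> q * (q + ((q + 3) * q + 1) + 1) + 1"
    using assms by (intro add_mono mult_mono) auto
  finally have kuhn: "T_kuhn adj Q (\<lambda>_. None) P \<le> q * (q + ((q + 3) * q + 1) + 1) + 1" .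
  have build: "T_build_adj P Q \<le> q * (q + 2) + 1"
    unfolding T_build_adj_eq using assms by (intro add_mono mult_mono) auto
  have "T_similar_alg th n1 n2 P Q
      = 3 + length P + length Q + (1 + T_build_adj P Q + (length Q + 1) + T_kuhn adj Q (\<lambda>_. None) P + (length Q + 1))"
    unfolding T_similar_alg_def T_matching_size_alg_def Let_def adj_def ..
  also have "\<dots> \<le> 3 + q + q + (1 + (q * (q + 2) + 1) + (q + 1) + (q * (q + ((q + 3) * q + 1) + 1) + 1) + (q + 1))"
    using assms build kuhn by linarith
  also have "\<dots> \<le> 8 * (q + 1) ^ 3" by (simp add: power3_eq_cube algebra_simps)
  finally show ?thesis .
qed

lemma T_syn_upto_alg_bound:
  "(\<forall>w \<le> v. T_similar_alg th n1 n2 (nb1 e1 w) (nb2 e2 w) \<le> B) \<Longrightarrow>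
   T_syn_upto_alg th n1 n2 nb1 nb2 e1 e2 v \<le> (v + 1) * (B + 3)"
  by (induction v) auto

lemma T_all_syn_alg_bound:
  assumes "\<forall>e1 \<in> set cs1. \<forall>e2 \<in> set cs2. \<forall>v \<le> u.
    T_similar_alg th n1 n2 (nb1 e1 v) (nb2 e2 v) \<le> B"
  shows "T_all_syn_alg th n1 n2 nb1 nb2 u cs1 cs2
    \<le> length cs1 * (length cs2 * ((u + 1) * (B + 3) + 1) + length cs2 + 3) + 1"
proof -
  have row: "T_syn_row_alg th n1 n2 nb1 nb2 u e1 es \<le> length es * ((u + 1) * (B + 3) + 1) + 1"
    if "\<forall>e2 \<in> set es. \<forall>v \<le> u. T_similar_alg th n1 n2 (nb1 e1 v) (nb2 e2 v) \<le> B" for e1 es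
    using that
  proof (induction es)
    case (Cons e2 es)
    thus ?case using T_syn_upto_alg_bound[of u th n1 n2 nb1 e1 nb2 e2 B] by simp
  qed simp
  show ?thesis using assms
  proof (induction cs1)
    case (Cons e1 cs1)
    thus ?case using row[of cs2 e1] by simp
  qed simp
qed

lemma neighborhood_sizes_finite:
  assumes "wf_schema S1" "wf_schema S2"
  shows "finite (insert 0 ({card (neighborhood S1 x v) | x v. x \<in> xcomps S1 \<and> v \<le> u}
     \<union> {card (neighborhood S2 y v) | y v. y \<in> xcomps S2 \<and> v \<le> u}))"
proof -
  have "{card (neighborhood S1 x v) | x v. x \<in> xcomps S1 \<and> v \<le> u}
      = (\<lambda>(x, v). card (neighborhood S1 x v)) ` (xcomps S1 \<times> {..u})"
    and "{card (neighborhood S2 y v) | y v. y \<in> xcomps S2 \<and> v \<le> u}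
      = (\<lambda>(y, v). card (neighborhood S2 y v)) ` (xcomps S2 \<times> {..u})"
    by auto
  thus ?thesis using assms unfolding wf_schema_def by simp
qed

lemma card_neighborhood_le_max_nbhd:
  assumes "wf_schema S1" "wf_schema S2" "v \<le> u"
  shows "x \<in> xcomps S1 \<Longrightarrow> card (neighborhood S1 x v) \<le> max_nbhd S1 S2 u"
    and "y \<in> xcomps S2 \<Longrightarrow> card (neighborhood S2 y v) \<le> max_nbhd S1 S2 u"
  unfolding max_nbhd_def using assms by (intro Max_ge[OF neighborhood_sizes_finite]; blast)+

text \<open>Every x-component has a nonempty neighborhood, so q is positive.\<close>
lemma max_nbhd_pos:
  assumes "wf_schema S1" "wf_schema S2" "x \<in> xcomps S1"
  shows "1 \<le> max_nbhd S1 S2 u"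
proof -
  have "finite (neighborhood S1 x 0)"
    using assms(1) unfolding wf_schema_def neighborhood_def by simp
  hence "1 \<le> card (neighborhood S1 x 0)"
    using self_in_neighborhood[OF assms(3)] by (metis One_nat_def Suc_leI card_gt_0_iff empty_iff)
  thus ?thesis using card_neighborhood_le_max_nbhd(1)[OF assms(1,2) _ assms(3), of 0 u] by simp
qed

text \<open>The arithmetic behind the final constant: with X = (u+1) q^3 >= 1, the cost bound of the
algorithm is at most 67 X m^2 + 2 m^2 + 3 m + 1 <= 72 X m^2 + 72.\<close>
lemma cost_arith:
  fixes u q m a b :: nat
  assumes "1 \<le> q" "1 \<le> m" "a \<le> m" "b \<le> m"
  shows "a * (b * ((u + 1) * (8 * (q + 1) ^ 3 + 3) + 1) + b + 3) + 1
    \<le> 72 * ((u + 1) * q ^ 3 * m ^ 2) + 72"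
proof -
  define X where "X = (u + 1) * q ^ 3"
  define K where "K = (u + 1) * (8 * (q + 1) ^ 3 + 3)"
  have q3: "1 \<le> q ^ 3" using assms(1) by simp
  have "(q + 1) ^ 3 \<le> (2 * q) ^ 3" using assms(1) by (intro power_mono) auto
  hence "8 * (q + 1) ^ 3 + 3 \<le> 67 * q ^ 3" using q3 by (simp add: power_mult_distrib)
  hence "K \<le> (u + 1) * (67 * q ^ 3)" unfolding K_def by (rule mult_le_mono2)
  hence "K + 1 \<le> 67 * X + 1" unfolding X_def by (simp add: ac_simps)
  hence "b * (K + 1) \<le> m * (67 * X + 1)" using assms(4) by (intro mult_le_mono)
  hence "b * (K + 1) + b + 3 \<le> m * (67 * X + 1) + m + 3" using assms(4) by linarith
  hence "a * (b * (K + 1) + b + 3) \<le> m * (m * (67 * X + 1) + m + 3)"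
    using assms(3) by (intro mult_le_mono)
  also have "\<dots> = 67 * (X * m ^ 2) + 2 * m ^ 2 + 3 * m"
    by (simp add: algebra_simps power2_eq_square)
  also have "\<dots> \<le> 72 * (X * m ^ 2)"
  proof -
    have "1 \<le> X" unfolding X_def using q3 by simp
    hence "m \<le> m ^ 2" "m ^ 2 \<le> X * m ^ 2" using assms(2) by (simp_all add: power2_eq_square)
    thus ?thesis by linarith
  qed
  finally show ?thesis unfolding X_def K_def by (simp add: algebra_simps)
qed

lemma all_syn_alg_time:
  assumes wf1: "wf_schema S1" and wf2: "wf_schema S2"
    and d1: "distinct cs1" and s1: "set cs1 = complex_elems S1"
    and d2: "distinct cs2" and s2: "set cs2 = complex_elems S2"
    and n1: "\<forall>x \<in> xcomps S1. \<forall>v \<le> u. distinct (nb1 x v) \<and> set (nb1 x v) = neighborhood S1 x v"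
    and n2: "\<forall>y \<in> xcomps S2. \<forall>v \<le> u. distinct (nb2 y v) \<and> set (nb2 y v) = neighborhood S2 y v"
  shows "T_all_syn_alg th (xname S1) (xname S2) nb1 nb2 u cs1 cs2
         \<le> 72 * ((u + 1) * max_nbhd S1 S2 u ^ 3 * max_complex S1 S2 ^ 2) + 72"
proof (cases cs1)
  case Nil thus ?thesis by simp
next
  case (Cons e0 rest)
  define q where "q = max_nbhd S1 S2 u"
  define m where "m = max_complex S1 S2"
  have cx: "\<And>e. e \<in> set cs1 \<Longrightarrow> e \<in> xcomps S1" "\<And>e. e \<in> set cs2 \<Longrightarrow> e \<in> xcomps S2"
    using s1 s2 unfolding complex_elems_def by auto
  have len1: "length (nb1 x v) \<le> q" if "x \<in> xcomps S1" "v \<le> u" for x v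
    using n1 card_neighborhood_le_max_nbhd(1)[OF wf1 wf2] that distinct_card unfolding q_def by metis
  have len2: "length (nb2 y v) \<le> q" if "y \<in> xcomps S2" "v \<le> u" for y v
    using n2 card_neighborhood_le_max_nbhd(2)[OF wf1 wf2] that distinct_card unfolding q_def by metis
  have "T_all_syn_alg th (xname S1) (xname S2) nb1 nb2 u cs1 cs2
      \<le> length cs1 * (length cs2 * ((u + 1) * (8 * (q + 1) ^ 3 + 3) + 1) + length cs2 + 3) + 1"
    using cx by (intro T_all_syn_alg_bound ballI allI impI T_similar_alg_bound len1 len2) auto
  also have "\<dots> \<le> 72 * ((u + 1) * q ^ 3 * m ^ 2) + 72"
  proof (rule cost_arith)
    show "1 \<le> q" unfolding q_def using max_nbhd_pos[OF wf1 wf2 cx(1)[of e0]] Cons by simp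
    show "length cs1 \<le> m" "length cs2 \<le> m"
      using distinct_card[OF d1] distinct_card[OF d2] s1 s2 unfolding m_def max_complex_def by auto
    thus "1 \<le> m" using Cons by simp
  qed
  finally show ?thesis unfolding q_def m_def .
qed

theorem mainTheorem5:
  "\<exists>C :: nat. \<forall>(S1 :: ('x, 'n) schema) (S2 :: ('y, 'n) schema) (th :: 'n \<Rightarrow> 'n \<Rightarrow> bool)
       (u :: nat) (cs1 :: 'x list) (cs2 :: 'y list)
       (nb1 :: 'x \<Rightarrow> nat \<Rightarrow> 'x list) (nb2 :: 'y \<Rightarrow> nat \<Rightarrow> 'y list).
     wf_schema S1 \<and> wf_schema S2 \<and> (\<forall>a b. th a b \<longrightarrow> th b a)
     \<and> distinct cs1 \<and> set cs1 = complex_elems S1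
     \<and> distinct cs2 \<and> set cs2 = complex_elems S2
     \<and> (\<forall>x \<in> xcomps S1. \<forall>v \<le> u. distinct (nb1 x v) \<and> set (nb1 x v) = neighborhood S1 x v)
     \<and> (\<forall>y \<in> xcomps S2. \<forall>v \<le> u. distinct (nb2 y v) \<and> set (nb2 y v) = neighborhood S2 y v)
     \<longrightarrow>
       all_syn_alg th (xname S1) (xname S2) nb1 nb2 u cs1 cs2
         = [((e1, e2), synonymous th S1 S2 e1 e2 u). e1 \<leftarrow> cs1, e2 \<leftarrow> cs2]
     \<and> T_all_syn_alg th (xname S1) (xname S2) nb1 nb2 u cs1 cs2
         \<le> C * ((u + 1) * max_nbhd S1 S2 u ^ 3 * max_complex S1 S2 ^ 2) + C"
  by (intro exI[of _ 72] allI impI; elim conjE;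
      intro conjI all_syn_alg_correct all_syn_alg_time; assumption)

end
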